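(* Consider the Variance-shifting Procedure described in the context, with the variance metric of model (I), i.e. $\mathcal{F}(\bar f)=\mathcal{E}$ for every $\bar f$, so $\Delta(\bar f,s^2)=\sum_{ij\in\mathcal{E}}\Delta_{ij}(s^2_{ij})$. Let $\Delta^*=\min\{\Delta(\bar f,\mathbf{V}(\mathcal{A})):(\bar f,\mathcal{A})\text{ compatible}\}$. Then for an iteration $k$ in which $s^2_k$ is computed (Step 4), $\Delta(\bar f^k,s^2_k)<\Delta(\bar f^{k-1},s^2_{k-1})$ unless $\Delta(\bar f^{k-1},s^2_{k-1})=\Delta^*$.
   Context: Network (DC model): bus set $\mathcal{B}$, $n=|\mathcal{B}|$; line set $\mathcal{E}$, $m=|\mathcal{E}|$; each line $ij$ has susceptance $b_{ij}>0$ and limit $f^{\max}_{ij}>0$. $B$ is the $n\times n$ bus susceptance matrix; $\hat B$ is $B$ with last row and column removed (assumed invertible); $\breve B=\begin{pmatrix}\hat B^{-1}&0\\0&0\end{pmatrix}$ with $i$-th row $\breve B_i$; $\pi_{ij}=\breve B_i^T-\breve B_j^T$. $\mathcal{G}\subseteq\mathcal{B}$ is the set of generator buses, with limits $p_i^{\min}\le p_i^{\max}$ and costs $c_i(p)=c_{i0}p^2+c_{i1}p+c_{i2}$, $c_{i0}\ge 0$. $d\in\mathbb{R}^n$ are loads, $\mu\in\mathbb{R}^n$ mean stochastic injections, $\omega$ a zero-mean random vector with covariance $\Omega$. $\mathcal{K}$ is a given convex set of $n\times n$ participation matrices $\mathcal{A}$ (with rows $\mathcal{A}_i$). Safety parameters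 $\nu_{ij}\ge0$ (lines) and $\nu_i\ge0$ (generators) are given. For a matrix $\mathcal{A}$, $\mathbf{V}(\mathcal{A})\in\mathbb{R}^m$ has entries $\mathbf{V}(\mathcal{A})_{ij}=b_{ij}^2\pi_{ij}^T(I-\mathcal{A})\Omega(I-\mathcal{A}^T)\pi_{ij}$. Compatibility: a pair $(\bar f,\mathcal{A})$ with $\bar f\in\mathbb{R}^m$ is compatible if $\mathcal{A}\in\mathcal{K}$ and there exist $\bar p\in\mathbb{R}^n$ (with $\bar p_i=0$ for $i\notin\mathcal{G}$) and $\bar\theta\in\mathbb{R}^n$ with $B\bar\theta=\bar p+\mu-d$; $\bar f_{ij}=b_{ij}(\bar\theta_i-\bar\theta_j)$ and $|\bar f_{ij}|+\nu_{ij}\sqrt{\mathbf{V}(\mathcal{A})_{ij}}\le f^{\max}_{ij}$ for all $ij\in\mathcal{E}$; and $p_i^{\min}+\nu_i\sqrt{\mathcal{A}_i^T\Omega\mathcal{A}_i}\le\bar p_i\le p_i^{\max}-\nu_i\sqrt{\mathcal{A}_i^T\Omega\mathcal{A}_i}$ for all $i\in\mathcal{G}$. Variance metric: for each line $ij$ a convex nondecreasing function $\Delta_{ij}:[0,\infty)\to[0,\infty)$, and for each flow vector $\bar f$ a set $\mathcal{F}(\bar f)\subseteq\mathcal{E}$ depending only on $\bar f$; $\Delta(\bar f,s^2)=\sum_{ij\in\mathcal{F}(\bar f)}\Delta_{ij}(s^2_{ij})$. Subproblems. For $\hat{\mathcal{A}}\in\mathcal{K}$ and $0<\tau<1$, $\mathrm{Reroute}(\hat{\mathcal{A}},\tau)$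 is: minimize $\sum_{i\in\mathcal{G}}[c_{i0}(\bar p_i^2+\hat{\mathcal{A}}_i^T\Omega\hat{\mathcal{A}}_i)+c_{i1}\bar p_i+c_{i2}]$ over $\bar p,\bar f,\bar\theta$ subject to $B\bar\theta=\bar p+\mu-d$, $\bar f_{ij}=b_{ij}(\bar\theta_i-\bar\theta_j)$, $|\bar f_{ij}|+\nu_{ij}\sqrt{\mathbf{V}(\hat{\mathcal{A}})_{ij}}\le(1-\tau)f^{\max}_{ij}$ for all $ij\in\mathcal{E}$, and the generator constraints above with $\hat{\mathcal{A}}$. For $\bar f'$, $\mathcal{A}'$, let $\mathbf{T}(\bar f',\mathcal{A}',\tau)=\{ij\in\mathcal{E}:|\bar f'_{ij}|+\nu_{ij}\sqrt{\mathbf{V}(\mathcal{A}')_{ij}}\ge(1-\tau)f^{\max}_{ij}\}$. $\mathrm{VShift}(\bar f',\mathcal{A}',\tau)$ is: minimize $\sum_{ij\in\mathcal{F}(\bar f')}\Delta_{ij}(s_{ij}^2)$ over $s\in\mathbb{R}^m_{\ge0}$, $\mathcal{A}$ subject to $\mathcal{A}\in\mathcal{K}$, $s_{ij}^2\ge\mathbf{V}(\mathcal{A})_{ij}$ for all $ij\in\mathcal{E}$, and $|\bar f'_{ij}|+\nu_{ij}s_{ij}\le f^{\max}_{ij}$ for $ij\in\mathbf{T}(\bar f',\mathcal{A}',\tau)$. Variance-shifting Procedure. Input: a feasible solution $(\bar p^0,\bar f^0,\mathcal{A}_0)$ (so $(\bar f^0,\mathcal{A}_0)$ is compatible), the metric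 $\Delta$, $0<\tau<1$, and an iteration bound $N\ge1$; set $s^2_0=\mathbf{V}(\mathcal{A}_0)$. For $k=1,\dots,N$: (1) solve $\mathrm{Reroute}(\mathcal{A}_{k-1},\tau)$; if infeasible, stop; else let $(\bar p^k,\bar f^k,\bar\theta^k)$ be an optimal solution. (2) Solve $\mathrm{VShift}(\bar f^k,\mathcal{A}_{k-1},\tau)$, with optimal solution $(\hat s_k,\hat{\mathcal{A}}_k)$. (3) Choose the largest $\lambda\in(0,1]$ such that $(\bar f^k,(1-\lambda)\mathcal{A}_{k-1}+\lambda\hat{\mathcal{A}}_k)$ is compatible. (4) Set $\mathcal{A}_k=(1-\lambda)\mathcal{A}_{k-1}+\lambda\hat{\mathcal{A}}_k$ and $s^2_k=\mathbf{V}(\mathcal{A}_k)$. (5) If $\Delta(\bar f^k,s^2_k)\ge\Delta(\bar f^{k-1},s^2_{k-1})$, stop; otherwise reset $\tau\leftarrow\tau/2$ and continue. *)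

theory Defs
  imports "HOL-Analysis.Analysis"
begin

text \<open>Buses are of type 'n option for a finite type 'n; the bus None plays the role of
the last bus (the one whose row and column are removed from B).\<close>

record 'b net =
  lines   :: "('b \<times> 'b) set"
  susc    :: "'b \<times> 'b \<Rightarrow> real"
  fmax    :: "'b \<times> 'b \<Rightarrow> real"
  gens    :: "'b set"
  pmin    :: "'b \<Rightarrow> real"
  pmax    :: "'b \<Rightarrow> real"
  cq      :: "'b \<Rightarrow> real"
  cl      :: "'b \<Rightarrow> real"
  cc      :: "'b \<Rightarrow> real"
  load    :: "'b \<Rightarrow> real"
  mu      :: "'b \<Rightarrow> real"
  Omega   :: "'b \<Rightarrow> 'b \<Rightarrow> real"
  Kset    :: "('b \<Rightarrow> 'b \<Rightarrow> real) set"
  nu_line :: "'b \<times> 'b \<Rightarrow> real"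
  nu_gen  :: "'b \<Rightarrow> real"

definition inc :: "'b \<Rightarrow> 'b \<times> 'b \<Rightarrow> real" where
  "inc x e = (if x = fst e then 1 else 0) - (if x = snd e then 1 else 0)"

definition Bmat :: "('b, 'c) net_scheme \<Rightarrow> 'b \<Rightarrow> 'b \<Rightarrow> real" where
  "Bmat N x y = (\<Sum>e\<in>lines N. susc N e * inc x e * inc y e)"

definition Bhat :: "('n::finite option, 'c) net_scheme \<Rightarrow> real^'n^'n" where
  "Bhat N = (\<chi> i j. Bmat N (Some i) (Some j))"

definition Bbreve :: "('n::finite option, 'c) net_scheme \<Rightarrow> 'n option \<Rightarrow> 'n option \<Rightarrow> real" where
  "Bbreve N x y = (case x of
      Some u \<Rightarrow> (case y of Some v \<Rightarrow> matrix_inv (Bhat N) $ u $ v | None \<Rightarrow> 0)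
    | None \<Rightarrow> 0)"

definition piv :: "('n::finite option, 'c) net_scheme \<Rightarrow> 'n option \<times> 'n option \<Rightarrow> 'n option \<Rightarrow> real" where
  "piv N e k = Bbreve N (fst e) k - Bbreve N (snd e) k"

definition idm :: "'b \<Rightarrow> 'b \<Rightarrow> real" where
  "idm i j = (if i = j then 1 else 0)"

definition mmul :: "('b::finite \<Rightarrow> 'b \<Rightarrow> real) \<Rightarrow> ('b \<Rightarrow> 'b \<Rightarrow> real) \<Rightarrow> 'b \<Rightarrow> 'b \<Rightarrow> real" where
  "mmul M P i j = (\<Sum>k\<in>UNIV. M i k * P k j)"

definition mtrans :: "('b \<Rightarrow> 'b \<Rightarrow> real) \<Rightarrow> 'b \<Rightarrow> 'b \<Rightarrow> real" where
  "mtrans M i j = M j i"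

definition qform :: "('b::finite \<Rightarrow> 'b \<Rightarrow> real) \<Rightarrow> ('b \<Rightarrow> real) \<Rightarrow> real" where
  "qform M x = (\<Sum>k\<in>UNIV. \<Sum>l\<in>UNIV. x k * M k l * x l)"

definition Vvar :: "('n::finite option, 'c) net_scheme \<Rightarrow> ('n option \<Rightarrow> 'n option \<Rightarrow> real)
                    \<Rightarrow> 'n option \<times> 'n option \<Rightarrow> real" where
  "Vvar N A e = (susc N e)\<^sup>2 *
     qform (mmul (mmul (\<lambda>i j. idm i j - A i j) (Omega N)) (\<lambda>i j. idm i j - mtrans A i j)) (piv N e)"

definition gvar :: "('b::finite, 'c) net_scheme \<Rightarrow> ('b \<Rightarrow> 'b \<Rightarrow> real) \<Rightarrow> 'b \<Rightarrow> real" where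
  "gvar N A i = qform (Omega N) (A i)"

text \<open>DC-feasibility of (p, theta, f) for participation matrix A, with line limits scaled by r
(r = 1: compatibility; r = 1 - tau: Reroute constraints).\<close>
definition dc_feasible :: "('n::finite option, 'c) net_scheme \<Rightarrow> real \<Rightarrow> ('n option \<Rightarrow> 'n option \<Rightarrow> real)
    \<Rightarrow> ('n option \<Rightarrow> real) \<Rightarrow> ('n option \<Rightarrow> real) \<Rightarrow> ('n option \<times> 'n option \<Rightarrow> real) \<Rightarrow> bool" where
  "dc_feasible N r A p \<theta> f \<longleftrightarrow>
     (\<forall>i. i \<notin> gens N \<longrightarrow> p i = 0) \<and>
     (\<forall>i. (\<Sum>j\<in>UNIV. Bmat N i j * \<theta> j) = p i + mu N i - load N i) \<and>
     (\<forall>e\<in>lines N. f e = susc N e * (\<theta> (fst e) - \<theta> (snd e)) \<and>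
                   \<bar>f e\<bar> + nu_line N e * sqrt (Vvar N A e) \<le> r * fmax N e) \<and>
     (\<forall>i\<in>gens N. pmin N i + nu_gen N i * sqrt (gvar N A i) \<le> p i \<and>
                  p i \<le> pmax N i - nu_gen N i * sqrt (gvar N A i))"

definition compatible :: "('n::finite option, 'c) net_scheme \<Rightarrow> ('n option \<times> 'n option \<Rightarrow> real)
    \<Rightarrow> ('n option \<Rightarrow> 'n option \<Rightarrow> real) \<Rightarrow> bool" where
  "compatible N f A \<longleftrightarrow> A \<in> Kset N \<and> (\<exists>p \<theta>. dc_feasible N 1 A p \<theta> f)"

definition reroute_cost :: "('b::finite, 'c) net_scheme \<Rightarrow> ('b \<Rightarrow> 'b \<Rightarrow> real) \<Rightarrow> ('b \<Rightarrow> real) \<Rightarrow> real" where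
  "reroute_cost N A p = (\<Sum>i\<in>gens N. cq N i * ((p i)\<^sup>2 + gvar N A i) + cl N i * p i + cc N i)"

definition reroute_opt where
  "reroute_opt N A \<tau> p \<theta> f \<longleftrightarrow>
     dc_feasible N (1 - \<tau>) A p \<theta> f \<and>
     (\<forall>p' \<theta>' f'. dc_feasible N (1 - \<tau>) A p' \<theta>' f' \<longrightarrow> reroute_cost N A p \<le> reroute_cost N A p')"

definition Tset where
  "Tset N f A \<tau> = {e \<in> lines N. \<bar>f e\<bar> + nu_line N e * sqrt (Vvar N A e) \<ge> (1 - \<tau>) * fmax N e}"

text \<open>Variance metric of model (I): F(f) = E for every f.\<close>
definition Delta_I :: "('b, 'c) net_scheme \<Rightarrow> ('b \<times> 'b \<Rightarrow> real \<Rightarrow> real) \<Rightarrow> ('b \<times> 'b \<Rightarrow> real) \<Rightarrow> real" where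
  "Delta_I N D s2 = (\<Sum>e\<in>lines N. D e (s2 e))"

definition vshift_feasible where
  "vshift_feasible N f' A' \<tau> s A \<longleftrightarrow>
     A \<in> Kset N \<and> (\<forall>e\<in>lines N. s e \<ge> 0 \<and> (s e)\<^sup>2 \<ge> Vvar N A e) \<and>
     (\<forall>e\<in>Tset N f' A' \<tau>. \<bar>f' e\<bar> + nu_line N e * s e \<le> fmax N e)"

definition vshift_opt where
  "vshift_opt N D f' A' \<tau> s A \<longleftrightarrow>
     vshift_feasible N f' A' \<tau> s A \<and>
     (\<forall>s' A''. vshift_feasible N f' A' \<tau> s' A'' \<longrightarrow>
        Delta_I N D (\<lambda>e. (s e)\<^sup>2) \<le> Delta_I N D (\<lambda>e. (s' e)\<^sup>2))"

definition mcomb :: "real \<Rightarrow> ('b \<Rightarrow> 'b \<Rightarrow> real) \<Rightarrow> ('b \<Rightarrow> 'b \<Rightarrow> real) \<Rightarrow> 'b \<Rightarrow> 'b \<Rightarrow> real" where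
  "mcomb t A A' i j = (1 - t) * A i j + t * A' i j"

definition largest_step where
  "largest_step N f A A' lam \<longleftrightarrow>
     0 < lam \<and> lam \<le> 1 \<and> compatible N f (mcomb lam A A') \<and>
     (\<forall>lam'. 0 < lam' \<and> lam' \<le> 1 \<and> compatible N f (mcomb lam' A A') \<longrightarrow> lam' \<le> lam)"

end

theory Submission
  imports Defs
begin

text \<open>Each V(A)_e is a positive semidefinite quadratic form in an affine function of A, so V and
hence Delta are convex along segments A' + t (A'' - A'). Suppose Delta(V(A_{k-1})) exceeds the
optimum Delta*, attained at some compatible A*. Since f^k solves Reroute with the tightened limits
(1 - tau) f^max, the line constraints hold strictly at A_{k-1}; by continuity they still hold at
A_t = (1 - t) A_{k-1} + t A* for small t > 0, so (sqrt V(A_t), A_t) is feasible for VShift and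
Delta(V(A_t)) < Delta(V(A_{k-1})) by convexity. Monotonicity of Delta transfers this bound to the
VShift optimum, and one more convexity step gives the strict decrease for the step of length
lambda > 0.\<close>

lemma qform_convex_combination:
  fixes M :: "'b::finite \<Rightarrow> 'b \<Rightarrow> real"
  shows "qform M (\<lambda>k. (1 - t) * x k + t * y k) =
    (1 - t) * qform M x + t * qform M y - t * (1 - t) * qform M (\<lambda>k. x k - y k)"
proof -
  have "(1 - t) * qform M x + t * qform M y - t * (1 - t) * qform M (\<lambda>k. x k - y k)
          - qform M (\<lambda>k. (1 - t) * x k + t * y k)
     = (\<Sum>k\<in>UNIV. \<Sum>l\<in>UNIV. (1 - t) * (x k * M k l * x l) + t * (y k * M k l * y l)
          - t * (1 - t) * ((x k - y k) * M k l * (x l - y l))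
          - ((1 - t) * x k + t * y k) * M k l * ((1 - t) * x l + t * y l))"
    by (simp add: qform_def sum_distrib_left sum.distrib sum_subtractf)
  also have "\<dots> = 0"
    by (intro sum.neutral ballI) (simp add: algebra_simps)
  finally show ?thesis by simp
qed

lemma qform_mmul_transpose:
  fixes W P :: "'b::finite \<Rightarrow> 'b \<Rightarrow> real"
  shows "qform (mmul (mmul P W) (mtrans P)) x = qform W (\<lambda>m. \<Sum>k\<in>UNIV. x k * P k m)"
proof -
  have "qform (mmul (mmul P W) (mtrans P)) x =
     (\<Sum>k\<in>UNIV. \<Sum>l\<in>UNIV. \<Sum>n\<in>UNIV. \<Sum>m\<in>UNIV. x k * P k m * W m n * P l n * x l)"
    by (simp add: qform_def mmul_def mtrans_def sum_distrib_left sum_distrib_right mult.assoc)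
  also have "\<dots> = (\<Sum>k\<in>UNIV. \<Sum>n\<in>UNIV. \<Sum>m\<in>UNIV. \<Sum>l\<in>UNIV. x k * P k m * W m n * P l n * x l)"
    by (rule sum.cong[OF refl], subst sum.swap, rule sum.cong[OF refl], rule sum.swap)
  also have "\<dots> = (\<Sum>n\<in>UNIV. \<Sum>m\<in>UNIV. \<Sum>k\<in>UNIV. \<Sum>l\<in>UNIV. x k * P k m * W m n * P l n * x l)"
    by (subst sum.swap, rule sum.cong[OF refl], rule sum.swap)
  also have "\<dots> = (\<Sum>m\<in>UNIV. \<Sum>n\<in>UNIV. \<Sum>k\<in>UNIV. \<Sum>l\<in>UNIV. x k * P k m * W m n * P l n * x l)"
    by (rule sum.swap)
  also have "\<dots> = qform W (\<lambda>m. \<Sum>k\<in>UNIV. x k * P k m)"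
    unfolding qform_def sum_distrib_left sum_distrib_right
    by (rule sum.cong[OF refl], rule sum.cong[OF refl], subst sum.swap, simp add: ac_simps)
  finally show ?thesis .
qed

definition Vvec :: "('n::finite option, 'c) net_scheme \<Rightarrow> ('n option \<Rightarrow> 'n option \<Rightarrow> real)
    \<Rightarrow> 'n option \<times> 'n option \<Rightarrow> 'n option \<Rightarrow> real" where
  "Vvec N A e m = (\<Sum>k\<in>UNIV. piv N e k * (idm k m - A k m))"

lemma Vvar_eq_qform_Vvec: "Vvar N A e = (susc N e)\<^sup>2 * qform (Omega N) (Vvec N A e)"
proof -
  have "(\<lambda>i j. idm i j - mtrans A i j) = mtrans (\<lambda>i j. idm i j - A i j)"
    by (auto simp: idm_def mtrans_def intro!: ext)
  then show ?thesis
    unfolding Vvar_def Vvec_def by (simp add: qform_mmul_transpose)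
qed

lemma Vvec_mcomb: "Vvec N (mcomb t X Y) e = (\<lambda>m. (1 - t) * Vvec N X e m + t * Vvec N Y e m)"
  by (rule ext)
     (simp add: Vvec_def mcomb_def sum_distrib_left sum.distrib[symmetric] algebra_simps)

lemma mcomb_0 [simp]: "mcomb 0 X Y = X"
  by (simp add: mcomb_def fun_eq_iff)

lemma Vvar_nonneg:
  assumes "\<And>x. qform (Omega N) x \<ge> 0"
  shows "Vvar N A e \<ge> 0"
  by (simp add: Vvar_eq_qform_Vvec assms)

lemma Vvar_mcomb_le:
  assumes psd: "\<And>x. qform (Omega N) x \<ge> 0" and t: "0 \<le> t" "t \<le> 1"
  shows "Vvar N (mcomb t X Y) e \<le> (1 - t) * Vvar N X e + t * Vvar N Y e"
proof -
  have "0 \<le> t * (1 - t) * qform (Omega N) (\<lambda>k. Vvec N X e k - Vvec N Y e k)"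
    using t psd by simp
  then have "qform (Omega N) (Vvec N (mcomb t X Y) e)
      \<le> (1 - t) * qform (Omega N) (Vvec N X e) + t * qform (Omega N) (Vvec N Y e)"
    unfolding Vvec_mcomb qform_convex_combination by linarith
  then have "(susc N e)\<^sup>2 * qform (Omega N) (Vvec N (mcomb t X Y) e)
      \<le> (susc N e)\<^sup>2 * ((1 - t) * qform (Omega N) (Vvec N X e) + t * qform (Omega N) (Vvec N Y e))"
    by (rule mult_left_mono) simp
  then show ?thesis
    by (simp add: Vvar_eq_qform_Vvec algebra_simps)
qed

lemma continuous_on_Vvar_mcomb: "continuous_on UNIV (\<lambda>t. Vvar N (mcomb t X Y) e)"
  unfolding Vvar_eq_qform_Vvec Vvec_mcomb qform_def by (intro continuous_intros)

lemma Delta_I_mono: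
  assumes "\<And>e. e \<in> lines N \<Longrightarrow> mono_on {0..} (D e)"
    and "\<And>e. e \<in> lines N \<Longrightarrow> 0 \<le> s2 e" "\<And>e. e \<in> lines N \<Longrightarrow> s2 e \<le> s2' e"
  shows "Delta_I N D s2 \<le> Delta_I N D s2'"
  unfolding Delta_I_def
proof (rule sum_mono)
  fix e assume "e \<in> lines N"
  with assms show "D e (s2 e) \<le> D e (s2' e)"
    by (meson atLeast_iff mono_onD order_trans)
qed

lemma Delta_I_Vvar_mcomb_le:
  assumes D_convex: "\<And>e. e \<in> lines N \<Longrightarrow> convex_on {0..} (D e)"
    and D_mono: "\<And>e. e \<in> lines N \<Longrightarrow> mono_on {0..} (D e)"
    and psd: "\<And>x. qform (Omega N) x \<ge> 0" and t: "0 \<le> t" "t \<le> 1"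
  shows "Delta_I N D (Vvar N (mcomb t X Y))
           \<le> (1 - t) * Delta_I N D (Vvar N X) + t * Delta_I N D (Vvar N Y)"
proof -
  let ?V = "\<lambda>e. (1 - t) * Vvar N X e + t * Vvar N Y e"
  have "Delta_I N D (Vvar N (mcomb t X Y)) \<le> Delta_I N D ?V"
    by (intro Delta_I_mono D_mono Vvar_mcomb_le[OF psd t] Vvar_nonneg[OF psd])
  also have "\<dots> \<le> (\<Sum>e\<in>lines N. (1 - t) * D e (Vvar N X e) + t * D e (Vvar N Y e))"
    unfolding Delta_I_def
  proof (rule sum_mono)
    fix e assume "e \<in> lines N"
    then show "D e (?V e) \<le> (1 - t) * D e (Vvar N X e) + t * D e (Vvar N Y e)"
      using convex_onD[OF D_convex, of e t "Vvar N X e" "Vvar N Y e"] t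
      by (simp add: Vvar_nonneg[OF psd])
  qed
  finally show ?thesis
    by (simp add: Delta_I_def sum.distrib sum_distrib_left)
qed

lemma Delta_I_mcomb_less:
  assumes D_convex: "\<And>e. e \<in> lines N \<Longrightarrow> convex_on {0..} (D e)"
    and D_mono: "\<And>e. e \<in> lines N \<Longrightarrow> mono_on {0..} (D e)"
    and psd: "\<And>x. qform (Omega N) x \<ge> 0" and t: "0 < t" "t \<le> 1"
    and less: "Delta_I N D (Vvar N Y) < Delta_I N D (Vvar N X)"
  shows "Delta_I N D (Vvar N (mcomb t X Y)) < Delta_I N D (Vvar N X)"
proof -
  have "Delta_I N D (Vvar N (mcomb t X Y))
          \<le> (1 - t) * Delta_I N D (Vvar N X) + t * Delta_I N D (Vvar N Y)"
    using Delta_I_Vvar_mcomb_le[OF D_convex D_mono psd] t by simp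
  also have "\<dots> < Delta_I N D (Vvar N X)"
    using t less by (simp add: algebra_simps)
  finally show ?thesis .
qed

lemma eventually_line_limits_mcomb:
  assumes slack: "\<And>e. e \<in> lines N \<Longrightarrow> \<bar>f e\<bar> + nu_line N e * sqrt (Vvar N X e) < fmax N e"
  shows "\<forall>\<^sub>F t in at_right 0. \<forall>e\<in>lines N.
           \<bar>f e\<bar> + nu_line N e * sqrt (Vvar N (mcomb t X Y) e) < fmax N e"
proof (rule eventually_ball_finite, simp, intro ballI)
  fix e assume e: "e \<in> lines N"
  have "((\<lambda>t. Vvar N (mcomb t X Y) e) \<longlongrightarrow> Vvar N X e) (at 0)"
    using continuous_on_Vvar_mcomb[of N X Y e, unfolded continuous_on_def, rule_format, of 0]
    by simp
  then have "((\<lambda>t. Vvar N (mcomb t X Y) e) \<longlongrightarrow> Vvar N X e) (at_right 0)"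
    by (rule tendsto_mono[OF at_le[OF subset_UNIV]])
  then have "((\<lambda>t. \<bar>f e\<bar> + nu_line N e * sqrt (Vvar N (mcomb t X Y) e)) \<longlongrightarrow>
               \<bar>f e\<bar> + nu_line N e * sqrt (Vvar N X e)) (at_right 0)"
    by (intro tendsto_intros)
  then show "\<forall>\<^sub>F t in at_right 0. \<bar>f e\<bar> + nu_line N e * sqrt (Vvar N (mcomb t X Y) e) < fmax N e"
    using slack[OF e] by (rule order_tendstoD(2))
qed

lemma reroute_opt_line_slack:
  assumes "reroute_opt N A \<tau> p \<theta> f" "0 < \<tau>" "e \<in> lines N" "fmax N e > 0"
  shows "\<bar>f e\<bar> + nu_line N e * sqrt (Vvar N A e) < fmax N e"
proof -
  have "\<bar>f e\<bar> + nu_line N e * sqrt (Vvar N A e) \<le> (1 - \<tau>) * fmax N e"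
    using assms(1,3) unfolding reroute_opt_def dc_feasible_def by blast
  also have "\<dots> < fmax N e"
    using assms(2,4) by (simp add: algebra_simps)
  finally show ?thesis .
qed

lemma vshift_opt_Delta_I_less:
  assumes D_convex: "\<And>e. e \<in> lines N \<Longrightarrow> convex_on {0..} (D e)"
    and D_mono: "\<And>e. e \<in> lines N \<Longrightarrow> mono_on {0..} (D e)"
    and psd: "\<And>x. qform (Omega N) x \<ge> 0"
    and K_convex: "\<And>t. 0 \<le> t \<Longrightarrow> t \<le> 1 \<Longrightarrow> mcomb t X Y \<in> Kset N"
    and slack: "\<And>e. e \<in> lines N \<Longrightarrow> \<bar>f e\<bar> + nu_line N e * sqrt (Vvar N X e) < fmax N e"
    and less: "Delta_I N D (Vvar N Y) < Delta_I N D (Vvar N X)"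
    and opt: "vshift_opt N D f X \<tau> s Z"
  shows "Delta_I N D (Vvar N Z) < Delta_I N D (Vvar N X)"
proof -
  have "\<forall>\<^sub>F t in at_right (0::real). 0 < t \<and> t < 1 \<and> (\<forall>e\<in>lines N.
          \<bar>f e\<bar> + nu_line N e * sqrt (Vvar N (mcomb t X Y) e) < fmax N e)"
    using eventually_line_limits_mcomb[OF slack]
    by (intro eventually_conj eventually_at_right_less order_tendstoD(2)[OF tendsto_ident_at]) auto
  then obtain t where t: "0 < t" "t < 1" and limits: "\<forall>e\<in>lines N.
      \<bar>f e\<bar> + nu_line N e * sqrt (Vvar N (mcomb t X Y) e) < fmax N e"
    using eventually_happens'[OF trivial_limit_at_right_real] by blast
  let ?At = "mcomb t X Y"
  have "vshift_feasible N f X \<tau> (\<lambda>e. sqrt (Vvar N ?At e)) ?At"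
    using K_convex t limits
    by (auto simp: vshift_feasible_def Tset_def Vvar_nonneg[OF psd] less_imp_le)
  then have "Delta_I N D (\<lambda>e. (s e)\<^sup>2) \<le> Delta_I N D (\<lambda>e. (sqrt (Vvar N ?At e))\<^sup>2)"
    using opt unfolding vshift_opt_def by blast
  also have "\<dots> = Delta_I N D (Vvar N ?At)"
    by (simp add: Vvar_nonneg[OF psd])
  also have "\<dots> < Delta_I N D (Vvar N X)"
    using Delta_I_mcomb_less[OF D_convex D_mono psd _ _ less] t by simp
  finally have s_less: "Delta_I N D (\<lambda>e. (s e)\<^sup>2) < Delta_I N D (Vvar N X)" .
  have "Delta_I N D (Vvar N Z) \<le> Delta_I N D (\<lambda>e. (s e)\<^sup>2)"
    using opt by (intro Delta_I_mono D_mono Vvar_nonneg[OF psd])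
      (auto simp: vshift_opt_def vshift_feasible_def)
  with s_less show ?thesis by linarith
qed

lemma halving_pos:
  fixes tau :: "nat \<Rightarrow> real"
  assumes "0 < tau 1" "\<forall>j. 1 \<le> j \<and> j < k \<longrightarrow> tau (Suc j) = tau j / 2" "1 \<le> j" "j \<le> k"
  shows "0 < tau j"
  using assms(3) assms(1,2,4)
  by (induction j rule: dec_induct) auto

theorem lemma7:
  fixes N :: "('n::finite option) net"
    and D :: "'n option \<times> 'n option \<Rightarrow> real \<Rightarrow> real"
    and \<tau>0 :: real and Nit k :: nat and Dstar :: real
    and p \<theta> :: "nat \<Rightarrow> 'n option \<Rightarrow> real"
    and f s :: "nat \<Rightarrow> 'n option \<times> 'n option \<Rightarrow> real"
    and A Ahat :: "nat \<Rightarrow> 'n option \<Rightarrow> 'n option \<Rightarrow> real"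
    and lam tau :: "nat \<Rightarrow> real"
  assumes b_pos: "\<forall>e\<in>lines N. susc N e > 0"
    and fmax_pos: "\<forall>e\<in>lines N. fmax N e > 0"
    and Bhat_inv: "invertible (Bhat N)"
    and p_lims: "\<forall>i\<in>gens N. pmin N i \<le> pmax N i"
    and cq_nonneg: "\<forall>i\<in>gens N. cq N i \<ge> 0"
    and nu_line_nonneg: "\<forall>e\<in>lines N. nu_line N e \<ge> 0"
    and nu_gen_nonneg: "\<forall>i\<in>gens N. nu_gen N i \<ge> 0"
    and Omega_sym: "\<forall>i j. Omega N i j = Omega N j i"
    and Omega_psd: "\<forall>x. qform (Omega N) x \<ge> 0"
    and K_convex: "\<forall>A1\<in>Kset N. \<forall>A2\<in>Kset N. \<forall>t. 0 \<le> t \<and> t \<le> 1 \<longrightarrow> mcomb t A1 A2 \<in> Kset N"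
    and D_props: "\<forall>e\<in>lines N. convex_on {0..} (D e) \<and> mono_on {0..} (D e) \<and>
                               (\<forall>x\<ge>0. D e x \<ge> 0)"
    and Dstar_min: "(\<exists>f' A'. compatible N f' A' \<and> Dstar = Delta_I N D (Vvar N A')) \<and>
                    (\<forall>f' A'. compatible N f' A' \<longrightarrow> Dstar \<le> Delta_I N D (Vvar N A'))"
    and tau0: "0 < \<tau>0" "\<tau>0 < 1"
    and iters: "1 \<le> Nit" "1 \<le> k" "k \<le> Nit"
    and init_feasible: "A 0 \<in> Kset N" "dc_feasible N 1 (A 0) (p 0) (\<theta> 0) (f 0)"
    and tau_init: "tau 1 = \<tau>0"
    and tau_halve: "\<forall>j. 1 \<le> j \<and> j < k \<longrightarrow> tau (Suc j) = tau j / 2"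
    and step1: "\<forall>j. 1 \<le> j \<and> j \<le> k \<longrightarrow> reroute_opt N (A (j - 1)) (tau j) (p j) (\<theta> j) (f j)"
    and step2: "\<forall>j. 1 \<le> j \<and> j \<le> k \<longrightarrow> vshift_opt N D (f j) (A (j - 1)) (tau j) (s j) (Ahat j)"
    and step3: "\<forall>j. 1 \<le> j \<and> j \<le> k \<longrightarrow> largest_step N (f j) (A (j - 1)) (Ahat j) (lam j)"
    and step4: "\<forall>j. 1 \<le> j \<and> j \<le> k \<longrightarrow> A j = mcomb (lam j) (A (j - 1)) (Ahat j)"
    and step5: "\<forall>j. 1 \<le> j \<and> j < k \<longrightarrow>
                  Delta_I N D (Vvar N (A j)) < Delta_I N D (Vvar N (A (j - 1)))"
  shows "Delta_I N D (Vvar N (A k)) < Delta_I N D (Vvar N (A (k - 1))) \<or>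
         Delta_I N D (Vvar N (A (k - 1))) = Dstar"
proof (rule disjCI)
  let ?Delta = "\<lambda>X. Delta_I N D (Vvar N X)"
  have psd: "\<And>x. qform (Omega N) x \<ge> 0" using Omega_psd by blast
  have D_convex: "\<And>e. e \<in> lines N \<Longrightarrow> convex_on {0..} (D e)"
    and D_mono: "\<And>e. e \<in> lines N \<Longrightarrow> mono_on {0..} (D e)" using D_props by auto
  have X_compat: "compatible N (f (k - 1)) (A (k - 1))"
  proof (cases "k = 1")
    case False
    then show ?thesis
      using iters step3[rule_format, of "k - 1"] step4[rule_format, of "k - 1"]
      by (simp add: largest_step_def)
  qed (use init_feasible in \<open>auto simp: compatible_def\<close>)
  obtain fs Y where Y: "compatible N fs Y" "Dstar = ?Delta Y" using Dstar_min by blast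
  assume "?Delta (A (k - 1)) \<noteq> Dstar"
  with X_compat Y Dstar_min have less: "?Delta Y < ?Delta (A (k - 1))"
    by (metis order.not_eq_order_implies_strict)
  have "0 < tau k" using halving_pos tau0 tau_init tau_halve iters by simp
  then have slack: "\<And>e. e \<in> lines N \<Longrightarrow>
      \<bar>f k e\<bar> + nu_line N e * sqrt (Vvar N (A (k - 1)) e) < fmax N e"
    using reroute_opt_line_slack step1 iters fmax_pos by blast
  have "\<And>t. 0 \<le> t \<Longrightarrow> t \<le> 1 \<Longrightarrow> mcomb t (A (k - 1)) Y \<in> Kset N"
    using K_convex X_compat Y(1) by (simp add: compatible_def)
  moreover have "vshift_opt N D (f k) (A (k - 1)) (tau k) (s k) (Ahat k)"
    using step2 iters by simp
  ultimately have "?Delta (Ahat k) < ?Delta (A (k - 1))"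
    using vshift_opt_Delta_I_less[OF D_convex D_mono psd _ slack less] by blast
  moreover have "0 < lam k" "lam k \<le> 1" using step3 iters by (auto simp: largest_step_def)
  ultimately show "?Delta (A k) < ?Delta (A (k - 1))"
    using Delta_I_mcomb_less[OF D_convex D_mono psd] step4 iters by simp
qed

end
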